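(* Let $K=\langle a,b,s\mid sas^{-1}=ab,\ sbs^{-1}=b\rangle$ and $L=\langle c,q\mid c(qcq^{-1})=(qcq^{-1})c\rangle$ (these groups are isomorphic via $a\mapsto cq^{-1}$, $b\mapsto qcq^{-1}c^{-1}$, $s\mapsto c$). For $i\in\mathbb{Z}$ let $c_i=q^icq^{-i}\in L$. Then: (1) $C_L(c_i)=\langle c_{i-1},c_i,c_{i+1}\rangle$ for every $i\in\mathbb{Z}$; (2) $C_K(s)=\langle aba^{-1},b,s\rangle$.
   Context: $C_G(g)$ denotes the centraliser of $g$ in $G$. *)

theory Defs
  imports "HOL-Algebra.Algebra"
begin

(* Words over a generating alphabet 'g: a letter (x, False) is x, (x, True) is x^{-1}. *)
type_synonym 'g word = "('g \<times> bool) list"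

inductive pres_eqv :: "('g word \<times> 'g word) set \<Rightarrow> 'g word \<Rightarrow> 'g word \<Rightarrow> bool"
  for R where
  refl: "pres_eqv R w w"
| sym: "pres_eqv R u v \<Longrightarrow> pres_eqv R v u"
| trans: "pres_eqv R u v \<Longrightarrow> pres_eqv R v w \<Longrightarrow> pres_eqv R u w"
| cancel: "pres_eqv R (u @ [(x, b), (x, \<not> b)] @ v) (u @ v)"
| rel: "(l, r) \<in> R \<Longrightarrow> pres_eqv R (u @ l @ v) (u @ r @ v)"

definition wclass :: "('g word \<times> 'g word) set \<Rightarrow> 'g word \<Rightarrow> 'g word set" where
  "wclass R w = {v. pres_eqv R w v}"

definition pres_mult :: "('g word \<times> 'g word) set \<Rightarrow> 'g word set \<Rightarrow> 'g word set \<Rightarrow> 'g word set" where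
  "pres_mult R U W = {v. \<exists>x\<in>U. \<exists>z\<in>W. pres_eqv R (x @ z) v}"

definition pres_group :: "('g word \<times> 'g word) set \<Rightarrow> 'g word set monoid" where
  "pres_group R = \<lparr> carrier = {wclass R w | w. True},
                    monoid.mult = pres_mult R,
                    monoid.one = wclass R [] \<rparr>"

definition gen :: "('g word \<times> 'g word) set \<Rightarrow> 'g \<Rightarrow> 'g word set" where
  "gen R x = wclass R [(x, False)]"

definition centraliser :: "('a, 'b) monoid_scheme \<Rightarrow> 'a \<Rightarrow> 'a set" where
  "centraliser G g = {h \<in> carrier G. h \<otimes>\<^bsub>G\<^esub> g = g \<otimes>\<^bsub>G\<^esub> h}"

datatype Kgen = Ka | Kb | Ks

definition K_rels :: "(Kgen word \<times> Kgen word) set" where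
  "K_rels = {([(Ks, False), (Ka, False), (Ks, True)], [(Ka, False), (Kb, False)]),
             ([(Ks, False), (Kb, False), (Ks, True)], [(Kb, False)])}"

definition K_grp :: "Kgen word set monoid" where "K_grp = pres_group K_rels"

datatype Lgen = Lc | Lq

definition L_rels :: "(Lgen word \<times> Lgen word) set" where
  "L_rels = {([(Lc, False), (Lq, False), (Lc, False), (Lq, True)],
              [(Lq, False), (Lc, False), (Lq, True), (Lc, False)])}"

definition L_grp :: "Lgen word set monoid" where "L_grp = pres_group L_rels"

definition c_el :: "int \<Rightarrow> Lgen word set" where
  "c_el i = (gen L_rels Lq [^]\<^bsub>L_grp\<^esub> i) \<otimes>\<^bsub>L_grp\<^esub> gen L_rels Lc
            \<otimes>\<^bsub>L_grp\<^esub> (gen L_rels Lq [^]\<^bsub>L_grp\<^esub> (- i))"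

end

theory Submission
  imports Defs
begin

text \<open>K is the semidirect product F(a, b) \<rtimes> \<langle>s\<rangle> in which s acts by a \<mapsto> ab, b \<mapsto> b, so
  every element has a unique normal form s^k w with w a reduced word
  b^m0 a^(\<plusminus>1) b^m1 ... a^(\<plusminus>1) b^mn; uniqueness holds because the presentation acts on normal
  forms by left multiplication. Now s^k w commutes with s iff w is fixed by a \<mapsto> ab^-1, b \<mapsto> b,
  and comparing syllables shows that this happens iff the letters a^(\<plusminus>1) of w alternate
  a, a^-1, a, a^-1, ..., i.e. iff w is a product of powers of b and aba^-1.
  Through c \<mapsto> s, q \<mapsto> a^-1 s the group L acts on the same normal forms and satisfies the
  relations of K for a = cq^-1, b = qcq^-1c^-1, in which form \<langle>aba^-1, b, c\<rangle> is
  \<langle>c_-1, c_0, c_1\<rangle>; conjugating by q^i gives the centraliser of c_i.\<close>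

section \<open>Presentations\<close>

lemma pres_eqv_context: "pres_eqv R u v \<Longrightarrow> pres_eqv R (p @ u @ q) (p @ v @ q)"
proof (induction rule: pres_eqv.induct)
  case (cancel u x b v)
  show ?case using pres_eqv.cancel[of R "p @ u" x b "v @ q"] by simp
next
  case (rel l r u v)
  show ?case using pres_eqv.rel[OF rel, of "p @ u" "v @ q"] by simp
qed (auto intro: pres_eqv.intros)

lemma pres_eqv_append:
  assumes "pres_eqv R u u'" and "pres_eqv R v v'"
  shows "pres_eqv R (u @ v) (u' @ v')"
  using pres_eqv_context[OF assms(1), of "[]" v] pres_eqv_context[OF assms(2), of u' "[]"]
  by (auto intro: pres_eqv.trans)

lemma wclass_eq_iff: "wclass R u = wclass R v \<longleftrightarrow> pres_eqv R u v"
  unfolding wclass_def by (auto intro: pres_eqv.intros)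

lemma wclass_relator: "(l, r) \<in> R \<Longrightarrow> wclass R l = wclass R r"
  using pres_eqv.rel[of l r R "[]" "[]"] by (simp add: wclass_eq_iff)

lemma carrier_pres_group: "carrier (pres_group R) = range (wclass R)"
  by (auto simp: pres_group_def)

lemma wclass_in_carrier [simp]: "wclass R w \<in> carrier (pres_group R)"
  by (simp add: carrier_pres_group)

lemma gen_in_carrier [simp]: "gen R x \<in> carrier (pres_group R)"
  by (simp add: gen_def)

lemma pres_group_mult_wclass [simp]:
  "wclass R u \<otimes>\<^bsub>pres_group R\<^esub> wclass R v = wclass R (u @ v)"
  unfolding pres_group_def pres_mult_def wclass_def
  by (auto intro: pres_eqv.intros pres_eqv_append)

lemma pres_group_one: "\<one>\<^bsub>pres_group R\<^esub> = wclass R []"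
  by (simp add: pres_group_def)

lemma pres_eqv_inverse_word: "pres_eqv R (rev (map (\<lambda>(x, b). (x, \<not> b)) w) @ w) []"
proof (induction w)
  case (Cons t w)
  obtain x b where "t = (x, b)" by force
  with Cons pres_eqv.cancel[of R "rev (map (\<lambda>(x, b). (x, \<not> b)) w)" x "\<not> b" w]
  show ?case by (auto intro: pres_eqv.trans)
qed (simp add: pres_eqv.refl)

lemma group_pres_group: "group (pres_group R)"
proof (rule groupI)
  fix x assume "x \<in> carrier (pres_group R)"
  then obtain w where x: "x = wclass R w" by (auto simp: carrier_pres_group)
  show "\<exists>y\<in>carrier (pres_group R). y \<otimes>\<^bsub>pres_group R\<^esub> x = \<one>\<^bsub>pres_group R\<^esub>"
    using pres_eqv_inverse_word[of R w]
    by (intro bexI[of _ "wclass R (rev (map (\<lambda>(x, b). (x, \<not> b)) w))"])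
       (auto simp: x pres_group_one wclass_eq_iff)
qed (auto simp: carrier_pres_group pres_group_one)

lemma wclass_inverse_letter: "wclass R [(x, True)] = inv\<^bsub>pres_group R\<^esub> gen R x"
proof -
  interpret group "pres_group R" by (rule group_pres_group)
  have "wclass R [(x, True)] \<otimes>\<^bsub>pres_group R\<^esub> gen R x = \<one>\<^bsub>pres_group R\<^esub>"
    using pres_eqv_inverse_word[of R "[(x, False)]"]
    by (simp add: gen_def pres_group_one wclass_eq_iff)
  then show ?thesis by (intro inv_equality[symmetric]) auto
qed

lemma wclass_Cons:
  "wclass R ((x, b) # w) =
     (if b then inv\<^bsub>pres_group R\<^esub> gen R x else gen R x) \<otimes>\<^bsub>pres_group R\<^esub> wclass R w"
proof (cases b)
  case True
  then show ?thesis
    using pres_group_mult_wclass[of R "[(x, True)]" w] by (simp add: wclass_inverse_letter)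
qed (simp add: gen_def)

lemma pres_group_generated: "carrier (pres_group R) = generate (pres_group R) (range (gen R))"
proof -
  interpret group "pres_group R" by (rule group_pres_group)
  have "wclass R w \<in> generate (pres_group R) (range (gen R))" for w
  proof (induction w)
    case Nil
    show ?case using generate.one by (metis pres_group_one)
  next
    case (Cons t w)
    then show ?case
      by (cases t) (auto simp: wclass_Cons intro: generate.eng generate.incl generate.inv)
  qed
  moreover have "generate (pres_group R) (range (gen R)) \<subseteq> carrier (pres_group R)"
    by (rule generate_incl) auto
  ultimately show ?thesis by (auto simp: carrier_pres_group)
qed

definition pres_act :: "('g word \<times> 'g word) set \<Rightarrow> ('g \<times> bool \<Rightarrow> 'x \<Rightarrow> 'x) \<Rightarrow> 'g word set \<Rightarrow> 'x \<Rightarrow> 'x"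
  where "pres_act R f g = foldr f (SOME w. g = wclass R w)"

locale pres_action =
  fixes R :: "('g word \<times> 'g word) set" and f :: "'g \<times> bool \<Rightarrow> 'x \<Rightarrow> 'x" and P :: "'x \<Rightarrow> bool"
  assumes invariant: "P x \<Longrightarrow> P (f t x)"
    and act_cancel: "P x \<Longrightarrow> f (y, b) (f (y, \<not> b) x) = x"
    and act_relator: "(l, r) \<in> R \<Longrightarrow> P x \<Longrightarrow> foldr f l x = foldr f r x"
begin

lemma foldr_invariant: "P x \<Longrightarrow> P (foldr f w x)"
  by (induction w) (auto intro: invariant)

lemma foldr_pres_eqv: "pres_eqv R u v \<Longrightarrow> P x \<Longrightarrow> foldr f u x = foldr f v x"
proof (induction arbitrary: x rule: pres_eqv.induct)
  case (cancel u y b v)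
  then show ?case using act_cancel[OF foldr_invariant] by simp
next
  case (rel l r u v)
  then show ?case using act_relator[OF rel(1) foldr_invariant] by simp
qed auto

lemma pres_act_wclass: "P x \<Longrightarrow> pres_act R f (wclass R w) x = foldr f w x"
proof -
  assume "P x"
  have "wclass R w = wclass R (SOME v. wclass R w = wclass R v)" by (rule someI) simp
  then have "pres_eqv R (SOME v. wclass R w = wclass R v) w"
    by (simp add: wclass_eq_iff pres_eqv.sym)
  then show ?thesis unfolding pres_act_def by (rule foldr_pres_eqv[OF _ \<open>P x\<close>])
qed

lemma pres_act_invariant: "g \<in> carrier (pres_group R) \<Longrightarrow> P x \<Longrightarrow> P (pres_act R f g x)"
  by (auto simp: carrier_pres_group pres_act_wclass foldr_invariant)

lemma pres_act_mult:
  "\<lbrakk>g \<in> carrier (pres_group R); h \<in> carrier (pres_group R); P x\<rbrakk>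
    \<Longrightarrow> pres_act R f (g \<otimes>\<^bsub>pres_group R\<^esub> h) x = pres_act R f g (pres_act R f h x)"
  by (auto simp: carrier_pres_group pres_act_wclass foldr_invariant)

lemma pres_act_one: "P x \<Longrightarrow> pres_act R f \<one>\<^bsub>pres_group R\<^esub> x = x"
  by (simp add: pres_group_one pres_act_wclass)

lemma pres_act_gen: "P x \<Longrightarrow> pres_act R f (gen R y) x = f (y, False) x"
  by (simp add: gen_def pres_act_wclass)

lemma pres_act_inv_gen: "P x \<Longrightarrow> pres_act R f (inv\<^bsub>pres_group R\<^esub> gen R y) x = f (y, True) x"
  by (simp add: pres_act_wclass flip: wclass_inverse_letter)

end

context group
begin

lemma inv_mult_cancel_left [simp]: "x \<in> carrier G \<Longrightarrow> y \<in> carrier G \<Longrightarrow> inv x \<otimes> (x \<otimes> y) = y"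
  and mult_inv_cancel_left [simp]: "x \<in> carrier G \<Longrightarrow> y \<in> carrier G \<Longrightarrow> x \<otimes> (inv x \<otimes> y) = y"
  by (simp_all flip: m_assoc)

lemma centraliser_subgroup:
  assumes "g \<in> carrier G" shows "subgroup (centraliser G g) G"
proof (rule subgroupI)
  fix h assume "h \<in> centraliser G g"
  then have "h \<in> carrier G" "h \<otimes> g = g \<otimes> h" by (auto simp: centraliser_def)
  then have "inv h \<otimes> g = g \<otimes> inv h"
    using assms by (metis inv_closed inv_solve_left m_assoc m_closed r_inv r_one)
  then show "inv h \<in> centraliser G g" using \<open>h \<in> carrier G\<close> by (simp add: centraliser_def)
next
  fix h k assume "h \<in> centraliser G g" "k \<in> centraliser G g"
  then show "h \<otimes> k \<in> centraliser G g"
    using assms by (auto simp: centraliser_def m_assoc) (metis m_assoc)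
qed (use assms in \<open>auto simp: centraliser_def intro!: exI[of _ \<one>]\<close>)

lemma int_pow_commute:
  assumes "x \<in> carrier G" "y \<in> carrier G" "x \<otimes> y = y \<otimes> x"
  shows "x [^] (i::int) \<otimes> y = y \<otimes> x [^] i"
proof -
  have "x \<in> centraliser G y" using assms by (simp add: centraliser_def)
  then have "x [^] i \<in> centraliser G y"
    by (rule subgroup_int_pow_closed[OF centraliser_subgroup[OF assms(2)]])
  then show ?thesis by (simp add: centraliser_def)
qed

lemma group_hom_conjugation: "g \<in> carrier G \<Longrightarrow> group_hom G G (\<lambda>x. g \<otimes> x \<otimes> inv g)"
  by (unfold_locales, auto intro!: homI simp: m_assoc)

lemma centraliser_conjugate:
  assumes g: "g \<in> carrier G" and x: "x \<in> carrier G"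
  shows "centraliser G (g \<otimes> x \<otimes> inv g) = (\<lambda>h. g \<otimes> h \<otimes> inv g) ` centraliser G x"
proof -
  have commute_iff: "(g \<otimes> h \<otimes> inv g) \<otimes> (g \<otimes> x \<otimes> inv g) = (g \<otimes> x \<otimes> inv g) \<otimes> (g \<otimes> h \<otimes> inv g)
      \<longleftrightarrow> h \<otimes> x = x \<otimes> h" if "h \<in> carrier G" for h
    using g x that by (simp add: m_assoc) (simp flip: m_assoc)
  have conj_back: "h = g \<otimes> (inv g \<otimes> h \<otimes> g) \<otimes> inv g" if "h \<in> carrier G" for h
    using g that by (simp add: m_assoc)
  show ?thesis
  proof
    show "centraliser G (g \<otimes> x \<otimes> inv g) \<subseteq> (\<lambda>h. g \<otimes> h \<otimes> inv g) ` centraliser G x"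
    proof
      fix h assume "h \<in> centraliser G (g \<otimes> x \<otimes> inv g)"
      then have "h \<in> carrier G" "h \<otimes> (g \<otimes> x \<otimes> inv g) = (g \<otimes> x \<otimes> inv g) \<otimes> h"
        by (auto simp: centraliser_def)
      then show "h \<in> (\<lambda>h. g \<otimes> h \<otimes> inv g) ` centraliser G x"
        using commute_iff[of "inv g \<otimes> h \<otimes> g"] conj_back g
        by (intro image_eqI[of _ _ "inv g \<otimes> h \<otimes> g"]) (auto simp: centraliser_def)
    qed
  qed (use commute_iff g in \<open>auto simp: centraliser_def\<close>)
qed

end

section \<open>Normal forms in F(a, b) \<rtimes> Z\<close>

text \<open>A pair (m, [(i_1, m_1), ..., (i_n, m_n)]) stands for b^m a^e_1 b^m_1 ... a^e_n b^m_n,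
  where e_k = -1 if i_k and e_k = 1 otherwise (as for the letters of words);
  a pair (u, k) stands for s^k u.\<close>

type_synonym syllables = "(bool \<times> int) list"
type_synonym fnf = "int \<times> syllables"
type_synonym knf = "fnf \<times> int"

definition reduced :: "syllables \<Rightarrow> bool" where
  "reduced = successively (\<lambda>(i, m) (j, _). i \<noteq> j \<longrightarrow> m \<noteq> 0)"

abbreviation reduced_knf :: "knf \<Rightarrow> bool" where
  "reduced_knf x \<equiv> reduced (snd (fst x))"

lemma reduced_simps [simp]:
  "reduced []"
  "reduced [x]"
  "reduced ((i, m) # (j, m') # L) \<longleftrightarrow> (i \<noteq> j \<longrightarrow> m \<noteq> 0) \<and> reduced ((j, m') # L)"
  by (simp_all add: reduced_def)

lemma reduced_Cons_tl: "reduced (x # L) \<Longrightarrow> reduced L"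
  unfolding reduced_def by (cases L) simp_all

definition fnf_mult_b :: "int \<Rightarrow> fnf \<Rightarrow> fnf" where
  "fnf_mult_b n u = (n + fst u, snd u)"

fun fnf_mult_a :: "bool \<Rightarrow> fnf \<Rightarrow> fnf" where
  "fnf_mult_a i (m, []) = (0, [(i, m)])"
| "fnf_mult_a i (m, (j, m') # L) =
     (if m = 0 \<and> j \<noteq> i then (m', L) else (0, (i, m) # (j, m') # L))"

lemma snd_fnf_mult_b [simp]: "snd (fnf_mult_b n u) = snd u"
  by (simp add: fnf_mult_b_def)

lemma fnf_mult_b_0 [simp]: "fnf_mult_b 0 u = u"
  by (simp add: fnf_mult_b_def)

lemma reduced_fnf_mult_a: "reduced (snd u) \<Longrightarrow> reduced (snd (fnf_mult_a i u))"
  by (cases "(i, u)" rule: fnf_mult_a.cases) (auto dest: reduced_Cons_tl)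

lemma fnf_mult_a_cancel:
  assumes "reduced (snd u)" and "i' \<noteq> i" shows "fnf_mult_a i' (fnf_mult_a i u) = u"
  using assms
proof (cases "(i, u)" rule: fnf_mult_a.cases)
  case (2 i'' m j m' L)
  with assms show ?thesis by (cases "m = 0 \<and> j \<noteq> i"; cases L) auto
qed auto

lemma fnf_mult_a_reduced_Cons: "reduced ((i, m) # L) \<Longrightarrow> fnf_mult_a i (m, L) = (0, (i, m) # L)"
  by (cases L) auto

text \<open>Left multiplication of normal forms by a, a^-1, b^n and s^n; the shifts come from
  a s^k = s^k a b^-k.\<close>

definition knf_mult_a :: "knf \<Rightarrow> knf" where
  "knf_mult_a x = (fnf_mult_a False (fnf_mult_b (- snd x) (fst x)), snd x)"

definition knf_mult_a_inv :: "knf \<Rightarrow> knf" where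
  "knf_mult_a_inv x = (fnf_mult_b (snd x) (fnf_mult_a True (fst x)), snd x)"

definition knf_mult_b :: "int \<Rightarrow> knf \<Rightarrow> knf" where
  "knf_mult_b n x = (fnf_mult_b n (fst x), snd x)"

definition knf_mult_s :: "int \<Rightarrow> knf \<Rightarrow> knf" where
  "knf_mult_s n x = (fst x, n + snd x)"

lemmas knf_mult_defs = knf_mult_a_def knf_mult_a_inv_def knf_mult_b_def knf_mult_s_def

lemma reduced_knf_mult [simp]:
  "reduced_knf x \<Longrightarrow> reduced_knf (knf_mult_a x)"
  "reduced_knf x \<Longrightarrow> reduced_knf (knf_mult_a_inv x)"
  "reduced_knf (knf_mult_b n x) \<longleftrightarrow> reduced_knf x"
  "reduced_knf (knf_mult_s n x) \<longleftrightarrow> reduced_knf x"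
  by (simp_all add: knf_mult_defs reduced_fnf_mult_a)

lemma knf_mult_a_cancel [simp]:
  "reduced_knf x \<Longrightarrow> knf_mult_a (knf_mult_a_inv x) = x"
  "reduced_knf x \<Longrightarrow> knf_mult_a_inv (knf_mult_a x) = x"
  by (auto simp: knf_mult_defs fnf_mult_b_def fnf_mult_a_cancel)

lemma knf_mult_b_add [simp]: "knf_mult_b n (knf_mult_b m x) = knf_mult_b (n + m) x"
  by (simp add: knf_mult_b_def fnf_mult_b_def)

lemma knf_mult_b_0 [simp]: "knf_mult_b 0 x = x" and knf_mult_s_0 [simp]: "knf_mult_s 0 x = x"
  by (simp_all add: knf_mult_b_def knf_mult_s_def)

lemma knf_mult_s_add [simp]: "knf_mult_s n (knf_mult_s m x) = knf_mult_s (n + m) x"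
  by (simp add: knf_mult_s_def)

fun starts_inv :: "syllables \<Rightarrow> bool" where
  "starts_inv [] = False"
| "starts_inv ((i, _) # _) = i"

text \<open>s_conj u is the normal form of s^-1 u s: conjugation by s^-1 maps a \<mapsto> ab^-1 and fixes b.\<close>

fun s_conj_syls :: "syllables \<Rightarrow> syllables" where
  "s_conj_syls [] = []"
| "s_conj_syls ((i, m) # L) = (i, m + of_bool (starts_inv L) - of_bool (\<not> i)) # s_conj_syls L"

definition s_conj :: "fnf \<Rightarrow> fnf" where
  "s_conj u = (fst u + of_bool (starts_inv (snd u)), s_conj_syls (snd u))"

fun alternating :: "syllables \<Rightarrow> bool" where
  "alternating [] = True"
| "alternating [_] = False"
| "alternating (x # y # L) \<longleftrightarrow> \<not> fst x \<and> fst y \<and> alternating L"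

lemma reduced_s_conj_syls: "reduced L \<Longrightarrow> reduced (s_conj_syls L)"
proof (induction L rule: s_conj_syls.induct)
  case (2 i m L)
  show ?case
  proof (cases L)
    case (Cons y L')
    obtain j m' where y: "y = (j, m')" by force
    have "i \<noteq> j \<longrightarrow> m + of_bool j - of_bool (\<not> i) \<noteq> 0"
      using 2(2) Cons y by (cases i; cases j) auto
    moreover have "reduced (s_conj_syls L)"
      using 2 reduced_Cons_tl by blast
    ultimately show ?thesis using Cons y by simp
  qed simp
qed simp

lemma s_conj_syls_fixed_alternating:
  "\<not> starts_inv L \<Longrightarrow> s_conj_syls L = L \<Longrightarrow> alternating L"
proof (induction L rule: induct_list012)
  case (2 x)
  then show ?case by (cases x) simp
next
  case (3 x y L)
  obtain i m j m' where xy: "x = (i, m)" "y = (j, m')" by force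
  have "\<not> i" using "3.prems"(1) xy by simp
  with "3.prems"(2) xy have "j" "\<not> starts_inv L" "s_conj_syls L = L"
    by (simp_all add: of_bool_eq_iff)
  with "3.IH" \<open>\<not> i\<close> xy show ?case by simp
qed simp

lemma s_conj_fixed_alternating: "s_conj u = u \<Longrightarrow> alternating (snd u)"
  by (cases u) (simp add: s_conj_def s_conj_syls_fixed_alternating)

section \<open>Groups satisfying the relations of K\<close>

locale K_relations = group +
  fixes A B S :: 'a
  assumes A_closed [simp]: "A \<in> carrier G" and B_closed [simp]: "B \<in> carrier G"
    and S_closed [simp]: "S \<in> carrier G"
    and S_A: "S \<otimes> A = A \<otimes> B \<otimes> S" and S_B: "S \<otimes> B = B \<otimes> S"
begin

definition A_if :: "bool \<Rightarrow> 'a" where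
  "A_if i = (if i then inv A else A)"

lemma A_if_closed [simp]: "A_if i \<in> carrier G"
  by (simp add: A_if_def)

fun eval_fnf :: "fnf \<Rightarrow> 'a" where
  "eval_fnf (m, []) = B [^] m"
| "eval_fnf (m, (i, m') # L) = B [^] m \<otimes> A_if i \<otimes> eval_fnf (m', L)"

definition eval_knf :: "knf \<Rightarrow> 'a" where
  "eval_knf x = S [^] snd x \<otimes> eval_fnf (fst x)"

lemma eval_fnf_closed [simp]: "eval_fnf u \<in> carrier G"
  by (induction u rule: eval_fnf.induct) auto

lemma eval_knf_closed [simp]: "eval_knf x \<in> carrier G"
  by (simp add: eval_knf_def)

lemma B_pow_eval_fnf: "B [^] n \<otimes> eval_fnf (m, L) = eval_fnf (n + m, L)"
  by (cases L) (auto simp: int_pow_mult m_assoc)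

lemma eval_fnf_mult_b: "eval_fnf (fnf_mult_b n u) = B [^] n \<otimes> eval_fnf u"
  by (cases u) (simp add: fnf_mult_b_def B_pow_eval_fnf)

lemma eval_fnf_mult_a: "eval_fnf (fnf_mult_a i u) = A_if i \<otimes> eval_fnf u"
proof (cases "(i, u)" rule: fnf_mult_a.cases)
  case (2 i' m j m' L)
  have "A_if i \<otimes> (A_if j \<otimes> x) = x" if "j \<noteq> i" "x \<in> carrier G" for x
    using that by (cases i) (auto simp: A_if_def)
  with 2 show ?thesis by (auto simp: m_assoc)
qed auto

lemma B_pow_S: "B [^] (n::int) \<otimes> S = S \<otimes> B [^] n"
  by (rule int_pow_commute[OF B_closed S_closed S_B[symmetric]])

lemma S_pow_B_pow: "S [^] (k::int) \<otimes> B [^] (n::int) = B [^] n \<otimes> S [^] k"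
  using B_pow_S[symmetric] by (intro int_pow_commute) simp_all

lemma inv_A_S_pow_A: "inv A \<otimes> S [^] (k::int) \<otimes> A = S [^] k \<otimes> B [^] k"
proof -
  interpret conj: group_hom G G "\<lambda>x. inv A \<otimes> x \<otimes> inv (inv A)"
    by (rule group_hom_conjugation) simp
  have "inv A \<otimes> S \<otimes> A = B \<otimes> S"
    by (simp add: m_assoc S_A)
  also have "\<dots> = S \<otimes> B" by (rule S_B[symmetric])
  finally have "inv A \<otimes> S [^] k \<otimes> A = (S \<otimes> B) [^] k"
    using conj.hom_int_pow[of S k] by simp
  also have "\<dots> = S [^] k \<otimes> B [^] k"
    by (rule int_pow_mult_distrib[OF S_B]) simp_all
  finally show ?thesis .
qed

lemma inv_A_S_pow: "inv A \<otimes> S [^] (k::int) = S [^] k \<otimes> B [^] k \<otimes> inv A"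
  unfolding inv_A_S_pow_A[symmetric] by (simp add: m_assoc)

lemma A_S_pow: "A \<otimes> S [^] (k::int) = S [^] k \<otimes> A \<otimes> B [^] (- k)"
proof -
  have "S [^] k \<otimes> A \<otimes> inv (B [^] k) = A \<otimes> (inv A \<otimes> S [^] k \<otimes> A) \<otimes> inv (B [^] k)"
    by (simp add: m_assoc)
  also have "\<dots> = A \<otimes> S [^] k"
    unfolding inv_A_S_pow_A by (simp add: m_assoc)
  finally show ?thesis by (simp add: int_pow_neg)
qed

lemma A_eval_knf: "A \<otimes> eval_knf x = eval_knf (knf_mult_a x)"
proof -
  have "A \<otimes> eval_knf x = (A \<otimes> S [^] snd x) \<otimes> eval_fnf (fst x)"
    by (simp add: eval_knf_def m_assoc)
  also have "\<dots> = S [^] snd x \<otimes> (A \<otimes> (B [^] (- snd x) \<otimes> eval_fnf (fst x)))"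
    by (simp add: A_S_pow m_assoc)
  finally show ?thesis
    by (simp add: eval_knf_def knf_mult_a_def eval_fnf_mult_a eval_fnf_mult_b A_if_def)
qed

lemma inv_A_eval_knf: "inv A \<otimes> eval_knf x = eval_knf (knf_mult_a_inv x)"
proof -
  have "inv A \<otimes> eval_knf x = (inv A \<otimes> S [^] snd x) \<otimes> eval_fnf (fst x)"
    by (simp add: eval_knf_def m_assoc)
  also have "\<dots> = S [^] snd x \<otimes> (B [^] snd x \<otimes> (inv A \<otimes> eval_fnf (fst x)))"
    by (simp add: inv_A_S_pow m_assoc)
  finally show ?thesis
    by (simp add: eval_knf_def knf_mult_a_inv_def eval_fnf_mult_a eval_fnf_mult_b A_if_def)
qed

lemma B_pow_eval_knf: "B [^] (n::int) \<otimes> eval_knf x = eval_knf (knf_mult_b n x)"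
  by (simp add: eval_knf_def knf_mult_b_def eval_fnf_mult_b S_pow_B_pow flip: m_assoc)

lemma S_pow_eval_knf: "S [^] (n::int) \<otimes> eval_knf x = eval_knf (knf_mult_s n x)"
  by (simp add: eval_knf_def knf_mult_s_def int_pow_mult flip: m_assoc)

lemma generate_eval_knf:
  assumes "g \<in> generate G {A, B, S}" shows "g \<in> eval_knf ` {x. reduced_knf x}"
proof -
  define N where "N = eval_knf ` {x. reduced_knf x}"
  have N_carrier: "N \<subseteq> carrier G" by (auto simp: N_def)
  have "\<forall>y \<in> N. g \<otimes> y \<in> N"
    using assms
  proof (induction rule: generate.induct)
    case (incl h)
    then show ?case
      using A_eval_knf B_pow_eval_knf[of 1] S_pow_eval_knf[of 1] by (auto simp: N_def)
  next
    case (inv h)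
    then show ?case
      using inv_A_eval_knf B_pow_eval_knf[of "-1"] S_pow_eval_knf[of "-1"]
      by (auto simp: N_def int_pow_neg)
  next
    case (eng h1 h2)
    have "h1 \<in> carrier G" "h2 \<in> carrier G"
      using eng.hyps generate_in_carrier[of "{A, B, S}"] by auto
    with eng.IH N_carrier show ?case by (auto simp: m_assoc)
  qed (use N_carrier in auto)
  moreover have "\<one> \<in> N"
    unfolding N_def by (rule image_eqI[of _ _ "((0, []), 0)"]) (simp_all add: eval_knf_def)
  ultimately have "g \<otimes> \<one> \<in> N" by blast
  moreover have "g \<in> carrier G"
    using generate_in_carrier[of "{A, B, S}"] assms by simp
  ultimately show ?thesis by (simp add: N_def)
qed

lemma A_if_S:
  "A_if i \<otimes> S = S \<otimes> B [^] (of_bool i :: int) \<otimes> A_if i \<otimes> B [^] (- of_bool (\<not> i) :: int)"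
  using A_S_pow[of 1] inv_A_S_pow[of 1] by (cases i) (simp_all add: A_if_def)

lemma eval_fnf_S_syls:
  "eval_fnf (m, L) \<otimes> S = S \<otimes> eval_fnf (m + of_bool (starts_inv L), s_conj_syls L)"
proof (induction L arbitrary: m)
  case Nil
  then show ?case by (simp add: B_pow_S)
next
  case (Cons y L)
  obtain i m' where y: "y = (i, m')" by force
  define u where "u = (m' + of_bool (starts_inv L), s_conj_syls L)"
  have "eval_fnf (m, (i, m') # L) \<otimes> S = B [^] m \<otimes> (A_if i \<otimes> S) \<otimes> eval_fnf u"
    by (simp add: m_assoc Cons u_def)
  also have "\<dots> = (B [^] m \<otimes> S) \<otimes> B [^] (of_bool i :: int) \<otimes> A_if i
                    \<otimes> (B [^] (- of_bool (\<not> i) :: int) \<otimes> eval_fnf u)"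
    unfolding A_if_S by (simp add: m_assoc)
  also have "\<dots> = S \<otimes> (B [^] (m + of_bool i) \<otimes> A_if i \<otimes> eval_fnf (fnf_mult_b (- of_bool (\<not> i)) u))"
    unfolding B_pow_S by (simp add: int_pow_mult eval_fnf_mult_b m_assoc)
  finally show ?case by (simp add: y u_def fnf_mult_b_def)
qed

lemma eval_fnf_S: "eval_fnf u \<otimes> S = S \<otimes> eval_fnf (s_conj u)"
  using eval_fnf_S_syls[of "fst u" "snd u"] by (simp add: s_conj_def)

lemma conj_A_B_pow: "(A \<otimes> B \<otimes> inv A) [^] (n::int) = A \<otimes> B [^] n \<otimes> inv A"
proof -
  interpret conj: group_hom G G "\<lambda>x. A \<otimes> x \<otimes> inv A"
    by (rule group_hom_conjugation) simp
  show ?thesis using conj.hom_int_pow[of B n] by simp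
qed

lemma eval_fnf_alternating:
  "alternating L \<Longrightarrow> eval_fnf (m, L) \<in> generate G {A \<otimes> B \<otimes> inv A, B, S}"
proof (induction L arbitrary: m rule: induct_list012)
  case 1
  show ?case
    by (simp add: generate.incl subgroup_int_pow_closed[OF generate_is_subgroup])
next
  case (3 x y L)
  obtain m1 m2 where "x = (False, m1)" "y = (True, m2)" using "3.prems" by (cases x; cases y) auto
  then have "eval_fnf (m, x # y # L) = B [^] m \<otimes> (A \<otimes> B \<otimes> inv A) [^] m1 \<otimes> eval_fnf (m2, L)"
    unfolding conj_A_B_pow by (simp add: A_if_def m_assoc)
  moreover have "eval_fnf (m2, L) \<in> generate G {A \<otimes> B \<otimes> inv A, B, S}"
    using "3.IH" "3.prems" \<open>x = (False, m1)\<close> \<open>y = (True, m2)\<close> by simp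
  ultimately show ?case
    by (simp add: generate.incl subgroup_int_pow_closed[OF generate_is_subgroup]
                  subgroup.m_closed[OF generate_is_subgroup])
qed simp

lemma conj_A_B_commutes_S: "(A \<otimes> B \<otimes> inv A) \<otimes> S = S \<otimes> (A \<otimes> B \<otimes> inv A)"
proof -
  have "(A \<otimes> B \<otimes> inv A) \<otimes> S = A \<otimes> (B \<otimes> S) \<otimes> B \<otimes> inv A"
    using inv_A_S_pow[of 1] by (simp add: m_assoc)
  also have "\<dots> = (A \<otimes> S) \<otimes> B \<otimes> B \<otimes> inv A"
    by (simp add: S_B m_assoc)
  also have "\<dots> = S \<otimes> (A \<otimes> B \<otimes> inv A)"
    using A_S_pow[of 1] by (simp add: m_assoc int_pow_neg)
  finally show ?thesis .
qed

lemma generate_subset_centraliser: "generate G {A \<otimes> B \<otimes> inv A, B, S} \<subseteq> centraliser G S"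
  using conj_A_B_commutes_S S_B
  by (intro generate_subgroup_incl centraliser_subgroup) (auto simp: centraliser_def)

end

text \<open>The action is used only to show that normal forms are unique (eval_fnf_inj).\<close>

locale K_model = K_relations +
  fixes act :: "'a \<Rightarrow> knf \<Rightarrow> knf"
  assumes generated: "carrier G = generate G {A, B, S}"
    and act_mult: "\<lbrakk>g \<in> carrier G; h \<in> carrier G; reduced_knf x\<rbrakk> \<Longrightarrow> act (g \<otimes> h) x = act g (act h x)"
    and act_reduced: "\<lbrakk>g \<in> carrier G; reduced_knf x\<rbrakk> \<Longrightarrow> reduced_knf (act g x)"
    and act_one: "reduced_knf x \<Longrightarrow> act \<one> x = x"
    and act_A: "reduced_knf x \<Longrightarrow> act A x = knf_mult_a x"
    and act_B: "reduced_knf x \<Longrightarrow> act B x = knf_mult_b 1 x"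
begin

lemma act_inv_A: "reduced_knf x \<Longrightarrow> act (inv A) x = knf_mult_a_inv x"
  using act_mult[of "inv A" A "knf_mult_a_inv x"] act_one[of "knf_mult_a_inv x"]
  by (simp add: act_A)

lemma act_B_pow: "reduced_knf x \<Longrightarrow> act (B [^] (n::int)) x = knf_mult_b n x"
proof (induction n arbitrary: x rule: int_induct[where k = 0])
  case base
  then show ?case by (simp add: act_one)
next
  case (step1 n)
  then show ?case by (simp add: int_pow_mult act_mult act_B)
next
  case (step2 n)
  have "act (B [^] (n - 1)) x = act (B [^] (n - 1) \<otimes> B) (knf_mult_b (- 1) x)"
    using step2.prems by (simp add: act_mult act_B)
  also have "B [^] (n - 1) \<otimes> B = B [^] n"
    using int_pow_mult[of B "n - 1" 1] by simp
  also have "act (B [^] n) (knf_mult_b (- 1) x) = knf_mult_b (n - 1) x"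
    using step2 by simp
  finally show ?case .
qed

lemma act_eval_fnf: "reduced L \<Longrightarrow> act (eval_fnf (m, L)) ((0, []), 0) = ((m, L), 0)"
proof (induction L arbitrary: m)
  case Nil
  then show ?case by (simp add: act_B_pow knf_mult_b_def fnf_mult_b_def)
next
  case (Cons y L)
  obtain i m' where y: "y = (i, m')" by force
  have "reduced L" using Cons.prems reduced_Cons_tl by blast
  then have "act (A_if i) (act (eval_fnf (m', L)) ((0, []), 0)) = ((0, (i, m') # L), 0)"
    using Cons fnf_mult_a_reduced_Cons[of i m' L] y
    by (cases i) (simp_all add: A_if_def act_A act_inv_A knf_mult_defs)
  with Cons.prems y show ?case
    by (simp add: act_mult act_reduced act_B_pow knf_mult_b_def fnf_mult_b_def)
qed

lemma eval_fnf_inj: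
  "\<lbrakk>reduced (snd u); reduced (snd v); eval_fnf u = eval_fnf v\<rbrakk> \<Longrightarrow> u = v"
  by (metis act_eval_fnf prod.collapse prod.inject)

lemma eval_fnf_commuting_S:
  assumes "reduced (snd u)" and "eval_fnf u \<otimes> S = S \<otimes> eval_fnf u"
  shows "eval_fnf u \<in> generate G {A \<otimes> B \<otimes> inv A, B, S}"
proof -
  have "eval_fnf (s_conj u) = eval_fnf u"
    using assms(2) by (simp add: eval_fnf_S)
  then have "s_conj u = u"
    using assms(1) by (intro eval_fnf_inj) (simp_all add: s_conj_def reduced_s_conj_syls)
  then show ?thesis
    using eval_fnf_alternating[of "snd u" "fst u"] s_conj_fixed_alternating by simp
qed

theorem centraliser_S: "centraliser G S = generate G {A \<otimes> B \<otimes> inv A, B, S}"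
proof
  let ?H = "generate G {A \<otimes> B \<otimes> inv A, B, S}"
  show "centraliser G S \<subseteq> ?H"
  proof
    fix g assume "g \<in> centraliser G S"
    then have g: "g \<in> carrier G" "g \<otimes> S = S \<otimes> g" by (auto simp: centraliser_def)
    then obtain x where x: "reduced_knf x" "g = eval_knf x"
      using generate_eval_knf[of g] generated by blast
    define u k where "u = fst x" and "k = snd x"
    then have red: "reduced (snd u)" and g_eq: "g = S [^] k \<otimes> eval_fnf u"
      using x by (simp_all add: eval_knf_def)
    have "S [^] k \<otimes> (eval_fnf u \<otimes> S) = S \<otimes> g"
      using g(2) by (simp add: g_eq m_assoc)
    also have "\<dots> = S [^] k \<otimes> (S \<otimes> eval_fnf u)"
      using int_pow_commute[of S S k] by (simp add: g_eq flip: m_assoc)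
    finally have "eval_fnf u \<in> ?H"
      using red by (intro eval_fnf_commuting_S) simp_all
    moreover have "S [^] k \<in> ?H"
      by (simp add: generate.incl subgroup_int_pow_closed[OF generate_is_subgroup])
    ultimately show "g \<in> ?H"
      by (simp add: g_eq subgroup.m_closed[OF generate_is_subgroup])
  qed
qed (rule generate_subset_centraliser)

end

section \<open>The group K\<close>

fun K_letter_act :: "Kgen \<times> bool \<Rightarrow> knf \<Rightarrow> knf" where
  "K_letter_act (Ka, i) = (if i then knf_mult_a_inv else knf_mult_a)"
| "K_letter_act (Kb, i) = knf_mult_b (if i then -1 else 1)"
| "K_letter_act (Ks, i) = knf_mult_s (if i then -1 else 1)"

interpretation K_act: pres_action K_rels K_letter_act reduced_knf
proof
  fix x t assume "reduced_knf x"
  then show "reduced_knf (K_letter_act t x)"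
    by (cases t rule: K_letter_act.cases) simp_all
next
  fix x y b assume "reduced_knf x"
  then show "K_letter_act (y, b) (K_letter_act (y, \<not> b) x) = x"
    by (cases y; cases b) simp_all
next
  fix l r x assume "(l, r) \<in> K_rels"
  then show "foldr K_letter_act l x = foldr K_letter_act r x"
    by (auto simp: K_rels_def knf_mult_defs fnf_mult_b_def algebra_simps)
qed

lemma UNIV_Kgen: "(UNIV :: Kgen set) = {Ka, Kb, Ks}"
  using Kgen.exhaust by auto

lemma K_relations_K: "K_relations K_grp (gen K_rels Ka) (gen K_rels Kb) (gen K_rels Ks)"
  unfolding K_grp_def
proof -
  let ?K = "pres_group K_rels"
  interpret group ?K by (rule group_pres_group)
  have conj_relator: "gen K_rels x \<otimes>\<^bsub>?K\<^esub> gen K_rels y = wclass K_rels r \<otimes>\<^bsub>?K\<^esub> gen K_rels x"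
    if "([(x, False), (y, False), (x, True)], r) \<in> K_rels" for x y r
  proof -
    have "wclass K_rels r = gen K_rels x \<otimes>\<^bsub>?K\<^esub> gen K_rels y \<otimes>\<^bsub>?K\<^esub> inv\<^bsub>?K\<^esub> gen K_rels x"
      using wclass_relator[OF that] by (simp add: wclass_Cons m_assoc flip: pres_group_one)
    then show ?thesis by (simp add: inv_solve_right)
  qed
  have "([(Ks, False), (Ka, False), (Ks, True)], [(Ka, False), (Kb, False)]) \<in> K_rels"
    and "([(Ks, False), (Kb, False), (Ks, True)], [(Kb, False)]) \<in> K_rels"
    by (simp_all add: K_rels_def)
  from this[THEN conj_relator] show "K_relations ?K (gen K_rels Ka) (gen K_rels Kb) (gen K_rels Ks)"
    by unfold_locales (simp_all add: wclass_Cons flip: pres_group_one)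
qed

lemma K_model_K:
  "K_model K_grp (gen K_rels Ka) (gen K_rels Kb) (gen K_rels Ks) (pres_act K_rels K_letter_act)"
proof (intro K_model.intro K_relations_K K_model_axioms.intro)
  show "carrier K_grp = generate K_grp {gen K_rels Ka, gen K_rels Kb, gen K_rels Ks}"
    using pres_group_generated[of K_rels] by (simp add: K_grp_def UNIV_Kgen)
qed (simp_all add: K_grp_def K_act.pres_act_mult K_act.pres_act_invariant K_act.pres_act_one
                   K_act.pres_act_gen)

theorem centraliser_K_s:
  "centraliser K_grp (gen K_rels Ks)
     = generate K_grp
         {gen K_rels Ka \<otimes>\<^bsub>K_grp\<^esub> gen K_rels Kb \<otimes>\<^bsub>K_grp\<^esub> inv\<^bsub>K_grp\<^esub> gen K_rels Ka,
          gen K_rels Kb, gen K_rels Ks}"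
  by (rule K_model.centraliser_S[OF K_model_K])

section \<open>The group L\<close>

locale L_relations = group +
  fixes c q :: 'a
  assumes c_closed [simp]: "c \<in> carrier G" and q_closed [simp]: "q \<in> carrier G"
    and c_commutes_conj: "c \<otimes> (q \<otimes> c \<otimes> inv q) = (q \<otimes> c \<otimes> inv q) \<otimes> c"
begin

definition c_conj :: "int \<Rightarrow> 'a" where
  "c_conj i = q [^] i \<otimes> c \<otimes> q [^] (- i)"

definition A_L :: 'a where "A_L = c \<otimes> inv q"

definition B_L :: 'a where "B_L = q \<otimes> c \<otimes> inv q \<otimes> inv c"

lemma c_conj_closed [simp]: "c_conj i \<in> carrier G"
  by (simp add: c_conj_def)

lemma A_L_closed [simp]: "A_L \<in> carrier G" and B_L_closed [simp]: "B_L \<in> carrier G"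
  by (simp_all add: A_L_def B_L_def)

lemma c_conj_eq: "c_conj i = q [^] i \<otimes> c \<otimes> inv (q [^] i)"
  by (simp add: c_conj_def int_pow_neg)

lemma conjugate_c_conj: "q [^] i \<otimes> c_conj j \<otimes> inv (q [^] i) = c_conj (i + j)"
  by (simp add: c_conj_eq int_pow_mult inv_mult_group m_assoc)

lemma c_conj_commute_succ: "c_conj j \<otimes> c_conj (j + 1) = c_conj (j + 1) \<otimes> c_conj j"
proof -
  interpret conj: group_hom G G "\<lambda>x. q [^] j \<otimes> x \<otimes> inv (q [^] j)"
    by (rule group_hom_conjugation) simp
  have "c_conj 0 \<otimes> c_conj 1 = c_conj 1 \<otimes> c_conj 0"
    using c_commutes_conj by (simp add: c_conj_eq)
  then have "q [^] j \<otimes> (c_conj 0 \<otimes> c_conj 1) \<otimes> inv (q [^] j)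
      = q [^] j \<otimes> (c_conj 1 \<otimes> c_conj 0) \<otimes> inv (q [^] j)"
    by simp
  then show ?thesis
    by (simp only: conj.hom_mult c_conj_closed conjugate_c_conj) simp
qed

lemma K_relations_L: "K_relations G A_L B_L c"
proof
  have "c \<otimes> B_L = (c \<otimes> (q \<otimes> c \<otimes> inv q)) \<otimes> inv c"
    by (simp add: B_L_def m_assoc)
  also have "\<dots> = B_L \<otimes> c"
    unfolding c_commutes_conj by (simp add: B_L_def m_assoc)
  finally show "c \<otimes> B_L = B_L \<otimes> c" .
qed (simp_all add: A_L_def B_L_def m_assoc)

lemma q_in_generate: "q \<in> generate G {A_L, B_L, c}"
proof -
  have "inv A_L \<in> generate G {A_L, B_L, c}" "c \<in> generate G {A_L, B_L, c}"
    by (simp_all add: generate.inv generate.incl)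
  moreover have "q = inv A_L \<otimes> c" by (simp add: A_L_def inv_mult_group m_assoc)
  ultimately show ?thesis by (metis generate.eng)
qed

lemma K_generators_in_generate_c_conj:
  "{A_L \<otimes> B_L \<otimes> inv A_L, B_L, c} \<subseteq> generate G {c_conj (-1), c, c_conj 1}"
proof -
  let ?H = "generate G {c_conj (-1), c, c_conj 1}"
  have H: "subgroup ?H G" by (rule generate_is_subgroup) simp
  have generators_in: "c_conj (-1) \<in> ?H" "c \<in> ?H" "c_conj 1 \<in> ?H"
    by (simp_all add: generate.incl)
  have "B_L = c_conj 1 \<otimes> inv c"
    by (simp add: B_L_def c_conj_eq m_assoc)
  moreover have "A_L \<otimes> B_L \<otimes> inv A_L = c \<otimes> c \<otimes> inv (c_conj (-1)) \<otimes> inv c"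
    by (simp add: A_L_def B_L_def c_conj_eq inv_mult_group m_assoc int_pow_neg)
  ultimately show ?thesis
    using generators_in by (simp add: subgroup.m_closed[OF H] subgroup.m_inv_closed[OF H])
qed

lemma centraliser_c:
  assumes "centraliser G c = generate G {A_L \<otimes> B_L \<otimes> inv A_L, B_L, c}"
  shows "centraliser G c = generate G {c_conj (-1), c, c_conj 1}"
proof
  show "centraliser G c \<subseteq> generate G {c_conj (-1), c, c_conj 1}"
    unfolding assms
    by (intro generate_subgroup_incl K_generators_in_generate_c_conj generate_is_subgroup) simp
  have "c_conj 0 = c" by (simp add: c_conj_eq)
  then show "generate G {c_conj (-1), c, c_conj 1} \<subseteq> centraliser G c"
    using c_conj_commute_succ[of "-1"] c_conj_commute_succ[of 0]
    by (intro generate_subgroup_incl centraliser_subgroup) (auto simp: centraliser_def)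
qed

lemma centraliser_c_conj:
  assumes "centraliser G c = generate G {c_conj (-1), c, c_conj 1}"
  shows "centraliser G (c_conj i) = generate G {c_conj (i - 1), c_conj i, c_conj (i + 1)}"
proof -
  let ?conj = "\<lambda>x. q [^] i \<otimes> x \<otimes> inv (q [^] i)"
  interpret conj: group_hom G G ?conj
    by (rule group_hom_conjugation) simp
  have "centraliser G (c_conj i) = ?conj ` centraliser G c"
    by (simp add: c_conj_eq centraliser_conjugate)
  also have "\<dots> = generate G (?conj ` {c_conj (-1), c, c_conj 1})"
    unfolding assms by (rule conj.generate_img[symmetric]) simp
  also have "?conj ` {c_conj (-1), c, c_conj 1} = {c_conj (i - 1), c_conj i, c_conj (i + 1)}"
    by (simp add: conjugate_c_conj flip: c_conj_eq)
  finally show ?thesis .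
qed

end

lemma L_relations_L: "L_relations L_grp (gen L_rels Lc) (gen L_rels Lq)"
  unfolding L_grp_def
proof -
  let ?L = "pres_group L_rels"
  interpret group ?L by (rule group_pres_group)
  have "([(Lc, False), (Lq, False), (Lc, False), (Lq, True)],
         [(Lq, False), (Lc, False), (Lq, True), (Lc, False)]) \<in> L_rels"
    by (simp add: L_rels_def)
  from wclass_relator[OF this]
  show "L_relations ?L (gen L_rels Lc) (gen L_rels Lq)"
    by unfold_locales (simp_all add: wclass_Cons m_assoc flip: pres_group_one)
qed

interpretation L: L_relations L_grp "gen L_rels Lc" "gen L_rels Lq"
  by (rule L_relations_L)

lemma c_el_eq_c_conj: "c_el i = L.c_conj i"
  by (simp add: c_el_def L.c_conj_def)

text \<open>The isomorphism L \<rightarrow> K maps c \<mapsto> s and q \<mapsto> a^-1 s.\<close>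

fun L_letter_act :: "Lgen \<times> bool \<Rightarrow> knf \<Rightarrow> knf" where
  "L_letter_act (Lc, i) = knf_mult_s (if i then -1 else 1)"
| "L_letter_act (Lq, i) = (if i then knf_mult_s (-1) \<circ> knf_mult_a else knf_mult_a_inv \<circ> knf_mult_s 1)"

interpretation L_act: pres_action L_rels L_letter_act reduced_knf
proof
  fix x t assume "reduced_knf x"
  then show "reduced_knf (L_letter_act t x)"
    by (cases t rule: L_letter_act.cases) simp_all
next
  fix x y b assume "reduced_knf x"
  then show "L_letter_act (y, b) (L_letter_act (y, \<not> b) x) = x"
    by (cases y; cases b) simp_all
next
  fix l r x assume "(l, r) \<in> L_rels" "reduced_knf x"
  then show "foldr L_letter_act l x = foldr L_letter_act r x"
    by (auto simp: L_rels_def knf_mult_defs fnf_mult_a_cancel fnf_mult_b_def)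
qed

lemma UNIV_Lgen: "(UNIV :: Lgen set) = {Lc, Lq}"
  using Lgen.exhaust by auto

lemma K_model_L: "K_model L_grp L.A_L L.B_L (gen L_rels Lc) (pres_act L_rels L_letter_act)"
proof (intro K_model.intro L.K_relations_L K_model_axioms.intro)
  have "carrier L_grp = generate L_grp {gen L_rels Lc, gen L_rels Lq}"
    using pres_group_generated[of L_rels] by (simp add: L_grp_def UNIV_Lgen)
  also have "\<dots> \<subseteq> generate L_grp {L.A_L, L.B_L, gen L_rels Lc}"
    using L.q_in_generate
    by (intro L.generate_subgroup_incl L.generate_is_subgroup) (auto intro: generate.incl)
  finally show "carrier L_grp = generate L_grp {L.A_L, L.B_L, gen L_rels Lc}"
    by (intro equalityI L.generate_incl) auto
next
  interpret group "pres_group L_rels" by (rule group_pres_group)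
  fix x assume "reduced_knf x"
  then show "pres_act L_rels L_letter_act L.A_L x = knf_mult_a x"
    and "pres_act L_rels L_letter_act L.B_L x = knf_mult_b 1 x"
    unfolding L.A_L_def L.B_L_def
    by (simp_all add: L_grp_def L_act.pres_act_mult L_act.pres_act_invariant L_act.pres_act_gen
                      L_act.pres_act_inv_gen knf_mult_defs fnf_mult_b_def fnf_mult_a_cancel
                      reduced_fnf_mult_a)
qed (simp_all add: L_grp_def L_act.pres_act_mult L_act.pres_act_invariant L_act.pres_act_one)

theorem centraliser_L_c_el:
  "centraliser L_grp (c_el i) = generate L_grp {c_el (i - 1), c_el i, c_el (i + 1)}"
  using L.centraliser_c_conj[OF L.centraliser_c[OF K_model.centraliser_S[OF K_model_L]]]
  by (simp add: c_el_eq_c_conj)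

theorem lemma6p2:
  shows "(\<forall>i::int. centraliser L_grp (c_el i)
            = generate L_grp {c_el (i - 1), c_el i, c_el (i + 1)})
       \<and> centraliser K_grp (gen K_rels Ks)
            = generate K_grp
                {gen K_rels Ka \<otimes>\<^bsub>K_grp\<^esub> gen K_rels Kb \<otimes>\<^bsub>K_grp\<^esub> inv\<^bsub>K_grp\<^esub> gen K_rels Ka,
                 gen K_rels Kb, gen K_rels Ks}"
  using centraliser_L_c_el centraliser_K_s by blast

end
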